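(* Let $\underline A=(A_1,\dots,A_m)\in\mathcal C_k(d)$ with $\Theta_k(\underline A)>0$. For $1\le i\le m$ let $R_i:=\mathrm{Range}(A_i)$, let $M_i$ be a real $d\times k$ matrix with $M_i^tM_i=I_k$ and $\mathrm{Range}(M_i)=R_i$, and let $C_{i,j}:=M_i^tA_iM_j\in\mathrm{GL}(k,\mathbb R)$. Define $F:X\times\mathbb R^d\to X\times\mathbb R^d$, $F(\omega,v)=(\sigma\omega,A_{\omega_0}v)$; $\tilde F:X\times\mathbb R^k\to X\times\mathbb R^k$, $\tilde F(\omega,v)=(\sigma\omega,\mathbf C(\omega)v)$ with $\mathbf C(\omega):=C_{\omega_1,\omega_0}$; and $H:X\times\mathbb R^k\to X\times\mathbb R^d$, $H(\omega,v)=(\sigma\omega,M_{\omega_0}v)$. Then $F\circ H=H\circ\tilde F$, and $L_i(F)=L_i(\tilde F)$ for $i=1,\dots,k$.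
   Context: Fix integers $m,d\ge1$, $1\le k\le d$, and a probability vector $\underline p=(p_1,\dots,p_m)$ with all $p_j>0$. Let $X=\{1,\dots,m\}^{\mathbb N}$ with the Bernoulli product measure $\mathbf p=\underline p^{\mathbb N}$ and the left shift $\sigma$. $\mathcal C_k(d)$ is the set of tuples $\underline A=(A_1,\dots,A_m)\in{\rm Mat}(d,\mathbb R)^m$ with $\mathrm{rank}(A_j)=k$ for all $j$, and $\Theta_k(\underline A):=\min\{\|\wedge_k(A_aA_b)\|:1\le a,b\le m\}$ with $\wedge_k$ the $k$-th exterior power (matrix of $k\times k$ minors). For a linear cocycle $G(\omega,v)=(\sigma\omega,\mathbf D(\omega)v)$ on $X\times\mathbb R^N$ with iterates $\mathbf D^n(\omega)=\mathbf D(\sigma^{n-1}\omega)\cdots\mathbf D(\omega)$, its $i$-th Lyapunov exponent $L_i(G)\in[-\infty,\infty)$ is the $\mathbf p$-a.s. constant limit $\lim_n\frac1n\log s_i(\mathbf D^n(\omega))$, $s_1\ge s_2\ge\dots$ being singular values. *)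

theory Defs
  imports "HOL-Analysis.Analysis" "HOL-Probability.Probability"
begin

text \<open>i-th singular value (i >= 1) of a real matrix, via the Courant--Fischer
  max-min formula: s_i(B) = max over i-dimensional subspaces V of min over unit v in V of |Bv|.\<close>
definition sing_val :: "nat \<Rightarrow> real^'n^'m \<Rightarrow> real" where
  "sing_val i B = Sup {Inf {norm (B *v v) | v. v \<in> V \<and> norm v = 1} | V. subspace V \<and> dim V = i}"

definition minor :: "nat \<Rightarrow> real^('d::{finite,linorder})^('d::{finite,linorder}) \<Rightarrow> ('d::{finite,linorder}) set \<Rightarrow> ('d::{finite,linorder}) set \<Rightarrow> real" where
  "minor k B I J = (\<Sum>p | p permutes {..<k}. of_int (sign p) *
      (\<Prod>a<k. B $ (sorted_list_of_set I ! a) $ (sorted_list_of_set J ! (p a))))"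

definition ext_pow :: "nat \<Rightarrow> real^('d::{finite,linorder})^('d::{finite,linorder}) \<Rightarrow> ('d::{finite,linorder}) set \<Rightarrow> ('d::{finite,linorder}) set \<Rightarrow> real" where
  "ext_pow k B = (\<lambda>I J. minor k B I J)"

definition ext_pow_norm :: "nat \<Rightarrow> real^('d::{finite,linorder})^('d::{finite,linorder}) \<Rightarrow> real" where
  "ext_pow_norm k B = sqrt (\<Sum>I\<in>{I. card I = k}. \<Sum>J\<in>{J. card J = k}. (ext_pow k B I J)\<^sup>2)"

definition Theta :: "nat \<Rightarrow> nat \<Rightarrow> (nat \<Rightarrow> real^('d::{finite,linorder})^('d::{finite,linorder})) \<Rightarrow> real" where
  "Theta k m A = Min {ext_pow_norm k (A a ** A b) | a b. a \<in> {1..m} \<and> b \<in> {1..m}}"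

text \<open>X = {1..m}^N realised as nat => nat; the Bernoulli measure is the infinite product of the pmf p
  (with set_pmf p = {1..m}), hence concentrated on {1..m}^N.\<close>
definition bernoulli_measure :: "nat pmf \<Rightarrow> (nat \<Rightarrow> nat) measure" where
  "bernoulli_measure p = PiM UNIV (\<lambda>_. measure_pmf p)"

definition shift :: "(nat \<Rightarrow> nat) \<Rightarrow> (nat \<Rightarrow> nat)" where
  "shift \<omega> = (\<lambda>j. \<omega> (Suc j))"

definition cocycle :: "((nat \<Rightarrow> nat) \<Rightarrow> real^'n^'n) \<Rightarrow> (nat \<Rightarrow> nat) \<times> (real^'n) \<Rightarrow> (nat \<Rightarrow> nat) \<times> (real^'n)" where
  "cocycle D = (\<lambda>(\<omega>, v). (shift \<omega>, D \<omega> *v v))"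

fun cocycle_iter :: "((nat \<Rightarrow> nat) \<Rightarrow> real^'n^'n) \<Rightarrow> nat \<Rightarrow> (nat \<Rightarrow> nat) \<Rightarrow> real^'n^'n" where
  "cocycle_iter D 0 \<omega> = mat 1"
| "cocycle_iter D (Suc n) \<omega> = D ((shift ^^ n) \<omega>) ** cocycle_iter D n \<omega>"

definition ln_ereal :: "real \<Rightarrow> ereal" where
  "ln_ereal x = (if x > 0 then ereal (ln x) else -\<infinity>)"

definition lyap :: "(nat \<Rightarrow> nat) measure \<Rightarrow> ((nat \<Rightarrow> nat) \<Rightarrow> real^'n^'n) \<Rightarrow> nat \<Rightarrow> ereal" where
  "lyap P D i = (THE L. AE \<omega> in P.
      (\<lambda>n. ln_ereal (sing_val i (cocycle_iter D n \<omega>)) / ereal (real n)) \<longlonglongrightarrow> L)"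

definition Cmat :: "(nat \<Rightarrow> real^'d^'d) \<Rightarrow> (nat \<Rightarrow> real^'k^'d) \<Rightarrow> nat \<Rightarrow> nat \<Rightarrow> real^'k^'k" where
  "Cmat A M i j = transpose (M i) ** A i ** M j"

definition Hmap :: "(nat \<Rightarrow> real^'k^'d) \<Rightarrow> (nat \<Rightarrow> nat) \<times> (real^'k) \<Rightarrow> (nat \<Rightarrow> nat) \<times> (real^'d)" where
  "Hmap M = (\<lambda>(\<omega>, v). (shift \<omega>, M (\<omega> 0) *v v))"

end

theory Submission
  imports Defs "Jordan_Normal_Form.Determinant"
begin

(*
  Since Range M_i = Range A_i, the matrix M_i M_i^t is the orthogonal projection onto Range A_i,
  hence A_a M_b = M_a C_{a,b}. This gives F o H = H o F~ and, by induction along w,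
  A_{w_n} ... A_{w_0} = M_{w_n} C^n(w) N  with the surjection  N = M_{w_0}^t A_{w_0}.
  The isometry M_{w_n} does not change singular values, and right multiplication by N, which
  has a bounded right inverse, changes them by at most a fixed factor; after taking logarithms
  and dividing by n, both cocycles have the same exponents.
  C_{i,j} is invertible because a kernel vector would give rank (A_i A_j) < k, so that every
  k x k minor of A_i A_j, and with it Theta_k, would vanish.
*)

hide_const (open) Matrix.mat
no_notation Matrix.vec_index (infixl "$" 100)
no_notation Matrix.scalar_prod (infix "\<bullet>" 70)

lemma tendsto_ereal_mult_factor_iff:
  fixes f r :: "'a \<Rightarrow> real"
  assumes r: "(r \<longlongrightarrow> 1) F"
  shows "((\<lambda>x. ereal (f x * r x)) \<longlongrightarrow> L) F \<longleftrightarrow> ((\<lambda>x. ereal (f x)) \<longlongrightarrow> L) F"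
proof
  have "((\<lambda>x. ereal (1 / r x)) \<longlongrightarrow> 1) F"
    using tendsto_ereal[OF tendsto_divide[OF tendsto_const r]] by (simp add: one_ereal_def)
  moreover assume "((\<lambda>x. ereal (f x * r x)) \<longlongrightarrow> L) F"
  ultimately have "((\<lambda>x. ereal (f x * r x) * ereal (1 / r x)) \<longlongrightarrow> L * 1) F"
    by (intro tendsto_mult_ereal) auto
  then have "((\<lambda>x. ereal (f x * r x) * ereal (1 / r x)) \<longlongrightarrow> L) F"
    by (simp only: mult_1_right)
  moreover have "\<forall>\<^sub>F x in F. ereal (f x * r x) * ereal (1 / r x) = ereal (f x)"
    using tendsto_imp_eventually_ne[OF r zero_neq_one[symmetric]] by eventually_elim simp
  ultimately show "((\<lambda>x. ereal (f x)) \<longlongrightarrow> L) F"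
    by (rule Lim_transform_eventually)
next
  have "((\<lambda>x. ereal (r x)) \<longlongrightarrow> 1) F"
    using tendsto_ereal[OF r] by (simp add: one_ereal_def)
  moreover assume "((\<lambda>x. ereal (f x)) \<longlongrightarrow> L) F"
  ultimately have "((\<lambda>x. ereal (f x) * ereal (r x)) \<longlongrightarrow> L * 1) F"
    by (intro tendsto_mult_ereal) auto
  then show "((\<lambda>x. ereal (f x * r x)) \<longlongrightarrow> L) F" by simp
qed

lemma tendsto_ereal_div_Suc_iff:
  fixes f :: "nat \<Rightarrow> real"
  shows "((\<lambda>n. ereal (f n / real (Suc n))) \<longlonglongrightarrow> L) \<longleftrightarrow> ((\<lambda>n. ereal (f n / real n)) \<longlonglongrightarrow> L)"
proof -
  have ev: "\<forall>\<^sub>F n in sequentially. ereal (f n / real n * (real n / real (Suc n))) = ereal (f n / real (Suc n))"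
    using eventually_gt_at_top[of "0::nat"] by eventually_elim (simp del: of_nat_Suc)
  have "((\<lambda>n. ereal (f n / real n * (real n / real (Suc n)))) \<longlonglongrightarrow> L)
      \<longleftrightarrow> ((\<lambda>n. ereal (f n / real n)) \<longlonglongrightarrow> L)"
    by (rule tendsto_ereal_mult_factor_iff[OF LIMSEQ_n_over_Suc_n])
  with tendsto_cong[OF ev] show ?thesis
    by (simp only:)
qed

lemma tendsto_ereal_div_nat_bounded_diff:
  fixes f g :: "nat \<Rightarrow> real"
  assumes "\<And>n. \<bar>f n - g n\<bar> \<le> K"
  shows "((\<lambda>n. ereal (f n / real n)) \<longlonglongrightarrow> L) \<longleftrightarrow> ((\<lambda>n. ereal (g n / real n)) \<longlonglongrightarrow> L)"
proof -
  have transfer: "(\<lambda>n. ereal (f' n / real n)) \<longlonglongrightarrow> L"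
    if bound: "\<And>n. \<bar>f' n - g' n\<bar> \<le> K" and g': "(\<lambda>n. ereal (g' n / real n)) \<longlonglongrightarrow> L"
    for f' g' :: "nat \<Rightarrow> real"
  proof -
    have "(\<lambda>n. (f' n - g' n) / real n) \<longlonglongrightarrow> 0"
      by (rule Lim_null_comparison[OF _ lim_const_over_n[of K]])
         (auto intro!: always_eventually divide_right_mono simp: bound)
    then have "(\<lambda>n. ereal ((f' n - g' n) / real n)) \<longlonglongrightarrow> 0"
      by (simp add: zero_ereal_def tendsto_ereal)
    with g' have "(\<lambda>n. ereal (g' n / real n) + ereal ((f' n - g' n) / real n)) \<longlonglongrightarrow> L + 0"
      by (intro tendsto_add_ereal_general1) auto
    then show ?thesis by (simp add: diff_divide_distrib)
  qed
  show ?thesis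
    using transfer[of f g] transfer[of g f] assms by (auto simp: abs_minus_commute)
qed

lemma norm_isometry:
  fixes M :: "real^'k^'d"
  assumes "transpose M ** M = mat 1"
  shows "norm (M *v x) = norm x"
proof -
  have "(M *v x) \<bullet> (M *v x) = ((M *v x) v* M) \<bullet> x"
    by (simp add: dot_lmul_matrix)
  also have "(M *v x) v* M = (transpose M ** M) *v x"
    by (simp add: transpose_matrix_vector[symmetric] matrix_vector_mul_assoc)
  finally have "(M *v x) \<bullet> (M *v x) = x \<bullet> x" using assms by simp
  then show ?thesis by (simp add: norm_eq_sqrt_inner)
qed

lemma isometry_projection_range:
  fixes M :: "real^'k^'d" and A :: "real^'n^'d"
  assumes "transpose M ** M = mat 1" and "range ((*v) M) = range ((*v) A)"
  shows "M ** transpose M ** A = A"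
proof (subst matrix_eq, intro allI)
  fix x
  obtain y where y: "A *v x = M *v y" using assms(2) by (metis rangeE rangeI)
  have "(M ** transpose M ** A) *v x = M *v (transpose M *v (A *v x))"
    by (simp add: matrix_vector_mul_assoc matrix_mul_assoc)
  also have "\<dots> = M *v ((transpose M ** M) *v y)"
    by (simp add: y matrix_vector_mul_assoc)
  finally have "(M ** transpose M ** A) *v x = M *v ((transpose M ** M) *v y)" .
  then show "(M ** transpose M ** A) *v x = A *v x" using assms(1) y by simp
qed

lemma right_invertible_transpose_isometry_mult:
  fixes M :: "real^'k^'d" and A :: "real^'n^'d"
  assumes "transpose M ** M = mat 1" and "range ((*v) M) = range ((*v) A)"
  obtains P where "transpose M ** A ** P = mat 1"
proof -
  have "y \<in> range ((*v) (transpose M ** A))" for y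
  proof -
    obtain x where x: "M *v y = A *v x" using assms(2) by (metis rangeE rangeI)
    have "(transpose M ** A) *v x = transpose M *v (M *v y)"
      by (simp add: x matrix_vector_mul_assoc)
    also have "\<dots> = (transpose M ** M) *v y"
      by (simp add: matrix_vector_mul_assoc)
    finally have "(transpose M ** A) *v x = (transpose M ** M) *v y" .
    then show ?thesis using assms(1) by (metis matrix_vector_mul_lid rangeI)
  qed
  then show ?thesis using that matrix_right_invertible_surjective by blast
qed

lemma range_matrix_mul: "range ((*v) (X ** Y)) = (*v) X ` range ((*v) Y)"
  by (auto simp: matrix_vector_mul_assoc[symmetric])

definition inf_stretch :: "real^'n^'m \<Rightarrow> (real^'n) set \<Rightarrow> real" where
  "inf_stretch B V = Inf {norm (B *v v) | v. v \<in> V \<and> norm v = 1}"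

lemma sing_val_eq_Sup_inf_stretch:
  "sing_val i B = Sup {inf_stretch B V | V. subspace V \<and> dim V = i}"
  by (simp add: sing_val_def inf_stretch_def)

lemma obtain_subspace_dim:
  assumes "i \<le> CARD('n)"
  obtains V :: "(real^'n) set" where "subspace V" and "dim V = i"
  using choose_subspace_of_subspace[of i "UNIV :: (real^'n) set"] assms that by auto

lemma subspace_ex_unit_vector:
  fixes V :: "(real^'n) set"
  assumes "subspace V" and "1 \<le> dim V"
  obtains v where "v \<in> V" and "norm v = 1"
proof -
  have "\<not> V \<subseteq> {0}"
  proof
    assume "V \<subseteq> {0}"
    then have "dim V = 0" using dim_eq_0[of V] by blast
    with assms(2) show False by simp
  qed
  then obtain v where v: "v \<in> V" "v \<noteq> 0" by auto
  then show ?thesis using assms(1) that[of "v /\<^sub>R norm v"] by (simp add: subspace_scale)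
qed

lemma inf_stretch_le: "v \<in> V \<Longrightarrow> norm v = 1 \<Longrightarrow> inf_stretch B V \<le> norm (B *v v)"
  unfolding inf_stretch_def by (rule cInf_lower) (auto intro: bdd_belowI[of _ 0])

lemma inf_stretch_greatest:
  fixes B :: "real^'n^'m"
  assumes "subspace V" and "1 \<le> dim V" and "\<And>v. v \<in> V \<Longrightarrow> norm v = 1 \<Longrightarrow> t \<le> norm (B *v v)"
  shows "t \<le> inf_stretch B V"
  unfolding inf_stretch_def
  using subspace_ex_unit_vector[OF assms(1,2)] assms(3) by (intro cInf_greatest) blast+

lemma inf_stretch_nonneg:
  fixes B :: "real^'n^'m"
  assumes "subspace V" and "1 \<le> dim V"
  shows "0 \<le> inf_stretch B V"
  using inf_stretch_greatest[OF assms, of 0 B] by simp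

lemma inf_stretch_mult_norm_le:
  assumes "subspace V" and "v \<in> V" and "v \<noteq> 0"
  shows "inf_stretch B V * norm v \<le> norm (B *v v)"
proof -
  have "inf_stretch B V \<le> norm (B *v (v /\<^sub>R norm v))"
    using assms by (intro inf_stretch_le) (auto simp: subspace_scale)
  then show ?thesis
    using assms(3) by (simp add: matrix_vector_mult_scaleR field_simps)
qed

lemma inf_stretch_le_sing_val:
  fixes B :: "real^'n^'m"
  assumes "subspace V" and "dim V = i" and "1 \<le> i"
  shows "inf_stretch B V \<le> sing_val i B"
proof -
  obtain K where K: "\<And>x. norm (B *v x) \<le> K * norm x"
    using linear_bounded[OF matrix_vector_mul_linear[of B]] by blast
  have "inf_stretch B W \<le> K" if W: "subspace W" "dim W = i" for W :: "(real^'n) set"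
  proof -
    obtain w where "w \<in> W" "norm w = 1"
      by (rule subspace_ex_unit_vector[of W]) (use W assms(3) in auto)
    then show ?thesis using inf_stretch_le[of w W B] K[of w] by simp
  qed
  then have "bdd_above {inf_stretch B W | W. subspace W \<and> dim W = i}"
    by (intro bdd_aboveI[where M = K]) blast
  then show ?thesis
    unfolding sing_val_eq_Sup_inf_stretch using assms by (intro cSup_upper) auto
qed

lemma sing_val_least:
  fixes B :: "real^'n^'m"
  assumes "i \<le> CARD('n)" and "\<And>V. subspace V \<Longrightarrow> dim V = i \<Longrightarrow> inf_stretch B V \<le> t"
  shows "sing_val i B \<le> t"
proof -
  obtain T :: "(real^'n) set" where "subspace T" "dim T = i"
    using obtain_subspace_dim[OF assms(1)] .
  then show ?thesis unfolding sing_val_eq_Sup_inf_stretch using assms(2) by (intro cSup_least) auto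
qed

lemma sing_val_lower_bound:
  fixes B :: "real^'n^'m"
  assumes "1 \<le> i" and "i \<le> CARD('n)" and "\<And>v. t * norm v \<le> norm (B *v v)"
  shows "t \<le> sing_val i B"
proof -
  obtain T :: "(real^'n) set" where T: "subspace T" "dim T = i"
    using obtain_subspace_dim[OF assms(2)] .
  have "t \<le> inf_stretch B T"
  proof (rule inf_stretch_greatest[OF T(1)])
    show "1 \<le> dim T" using T(2) assms(1) by simp
    show "t \<le> norm (B *v v)" if "norm v = 1" for v using assms(3)[of v] that by simp
  qed
  also have "\<dots> \<le> sing_val i B" using inf_stretch_le_sing_val[OF T assms(1)] .
  finally show ?thesis .
qed

lemma sing_val_nonneg:
  fixes B :: "real^'n^'m"
  assumes "1 \<le> i" and "i \<le> CARD('n)"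
  shows "0 \<le> sing_val i B"
  using sing_val_lower_bound[OF assms, of 0 B] by simp

lemma sing_val_pos_if_invertible:
  fixes B :: "real^'n^'n"
  assumes "invertible B" and "1 \<le> i" and "i \<le> CARD('n)"
  shows "0 < sing_val i B"
proof -
  obtain B' where B': "B' ** B = mat 1" using assms(1) invertible_left_inverse by blast
  obtain K where K: "0 < K" "\<And>x. norm (B' *v x) \<le> K * norm x"
    using linear_bounded_pos[OF matrix_vector_mul_linear[of B']] by blast
  have "norm v \<le> K * norm (B *v v)" for v
    using K(2)[of "B *v v"] B' by (simp add: matrix_vector_mul_assoc)
  then have "1 / K \<le> sing_val i B"
    using K(1) by (intro sing_val_lower_bound[OF assms(2,3)]) (simp add: field_simps)
  then show ?thesis using K(1) by (smt (verit) divide_pos_pos)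
qed

lemma sing_val_isometry_mult:
  fixes M :: "real^'k^'d" and B :: "real^'n^'k"
  assumes "transpose M ** M = mat 1"
  shows "sing_val i (M ** B) = sing_val i B"
  unfolding sing_val_def by (simp add: matrix_vector_mul_assoc[symmetric] norm_isometry[OF assms])

lemma sing_val_mult_right_le:
  fixes B :: "real^'n^'m" and N :: "real^'p^'n"
  assumes i: "1 \<le> i" "i \<le> CARD('p)" "i \<le> CARD('n)"
    and c: "0 < c" "\<And>x. norm (N *v x) \<le> c * norm x"
  shows "sing_val i (B ** N) \<le> c * sing_val i B"
proof (rule sing_val_least[OF i(2)])
  fix V :: "(real^'p) set" assume V: "subspace V" "dim V = i"
  show "inf_stretch (B ** N) V \<le> c * sing_val i B"
  proof (cases "inj_on ((*v) N) V")
    case True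
    let ?W = "(*v) N ` V"
    have "inj_on ((*v) N) (span V)"
      using True V(1) by (simp add: span_eq_iff[THEN iffD2])
    then have W: "subspace ?W" "dim ?W = i"
      using V dim_image_eq[OF matrix_vector_mul_linear] linear_subspace_image[OF matrix_vector_mul_linear]
      by auto
    have "inf_stretch (B ** N) V \<le> c * norm (B *v w)" if w: "w \<in> ?W" "norm w = 1" for w
    proof -
      obtain v where v: "v \<in> V" "w = N *v v" using w(1) by auto
      with w(2) have "v \<noteq> 0" by auto
      have "inf_stretch (B ** N) V \<le> inf_stretch (B ** N) V * (c * norm v)"
        using c(2)[of v] v w(2) inf_stretch_nonneg[of V "B ** N"] V i(1)
        by (simp add: mult_le_cancel_left1)
      also have "\<dots> \<le> c * norm (B *v w)"
        using inf_stretch_mult_norm_le[OF V(1) v(1) \<open>v \<noteq> 0\<close>, of "B ** N"] c(1)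
        by (simp add: v(2) matrix_vector_mul_assoc[symmetric] mult.left_commute)
      finally show ?thesis .
    qed
    then have "inf_stretch (B ** N) V / c \<le> inf_stretch B ?W"
      using W i(1) c(1) by (intro inf_stretch_greatest) (auto simp: field_simps)
    then have "inf_stretch (B ** N) V \<le> c * inf_stretch B ?W"
      using c(1) by (simp add: field_simps)
    also have "\<dots> \<le> c * sing_val i B"
      using inf_stretch_le_sing_val[OF W i(1), of B] c(1) by simp
    finally show ?thesis .
  next
    case False
    then obtain v where v: "v \<in> V" "N *v v = 0" "v \<noteq> 0"
      using linear_inj_on_iff_eq_0[OF matrix_vector_mul_linear V(1)] by blast
    have "inf_stretch (B ** N) V * norm v \<le> 0"
      using inf_stretch_mult_norm_le[OF V(1) v(1,3), of "B ** N"] v(2)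
      by (simp add: matrix_vector_mul_assoc[symmetric])
    then have "inf_stretch (B ** N) V \<le> 0"
      using v(3) by (simp add: mult_le_0_iff)
    also have "0 \<le> c * sing_val i B" using sing_val_nonneg[OF i(1,3), of B] c(1) by simp
    finally show ?thesis .
  qed
qed

lemma sing_val_le_mult_right_inverse:
  fixes B :: "real^'n^'m" and N :: "real^'p^'n" and P :: "real^'n^'p"
  assumes "N ** P = mat 1" and i: "1 \<le> i" "i \<le> CARD('n)" "i \<le> CARD('p)"
    and c: "0 < c" "\<And>x. norm (P *v x) \<le> c * norm x"
  shows "sing_val i B \<le> c * sing_val i (B ** N)"
  using sing_val_mult_right_le[OF i(1,2,3) c, of "B ** N"] assms(1)
  by (simp flip: matrix_mul_assoc)

lemma ln_sing_val_mult_right_invertible_bounded: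
  fixes N :: "real^'p^'n" and P :: "real^'n^'p"
  assumes "N ** P = mat 1" and i: "1 \<le> i" "i \<le> CARD('n)" "i \<le> CARD('p)"
  obtains K where "\<And>B :: real^'n^'m. 0 < sing_val i B \<Longrightarrow>
    0 < sing_val i (B ** N) \<and> \<bar>ln (sing_val i (B ** N)) - ln (sing_val i B)\<bar> \<le> K"
proof -
  obtain c1 where c1: "0 < c1" "\<And>x. norm (N *v x) \<le> c1 * norm x"
    using linear_bounded_pos[OF matrix_vector_mul_linear[of N]] by blast
  obtain c2 where c2: "0 < c2" "\<And>x. norm (P *v x) \<le> c2 * norm x"
    using linear_bounded_pos[OF matrix_vector_mul_linear[of P]] by blast
  have "0 < sing_val i (B ** N) \<and> \<bar>ln (sing_val i (B ** N)) - ln (sing_val i B)\<bar> \<le> \<bar>ln c1\<bar> + \<bar>ln c2\<bar>"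
    if B: "0 < sing_val i B" for B :: "real^'n^'m"
  proof -
    have up: "sing_val i (B ** N) \<le> c1 * sing_val i B"
      using sing_val_mult_right_le[OF i(1,3,2) c1] .
    have lo: "sing_val i B \<le> c2 * sing_val i (B ** N)"
      using sing_val_le_mult_right_inverse[OF assms c2] .
    with B c2(1) have pos: "0 < sing_val i (B ** N)"
      by (smt (verit) mult_nonneg_nonpos)
    have "ln (sing_val i (B ** N)) \<le> ln (c1 * sing_val i B)"
      using up pos by simp
    then have "ln (sing_val i (B ** N)) \<le> ln c1 + ln (sing_val i B)"
      using B c1(1) by (simp add: ln_mult)
    moreover have "ln (sing_val i B) \<le> ln (c2 * sing_val i (B ** N))"
      using lo B by simp
    then have "ln (sing_val i B) \<le> ln c2 + ln (sing_val i (B ** N))"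
      using pos c2(1) by (simp add: ln_mult)
    ultimately show ?thesis using pos by linarith
  qed
  then show ?thesis using that by blast
qed

lemma leibniz_sum_eq_0_if_kernel:
  fixes S :: "nat \<Rightarrow> nat \<Rightarrow> real" and v :: "nat \<Rightarrow> real"
  assumes "\<And>a. a < k \<Longrightarrow> (\<Sum>b<k. S a b * v b) = 0" and "b0 < k" and "v b0 \<noteq> 0"
  shows "(\<Sum>p | p permutes {..<k}. of_int (sign p) * (\<Prod>a<k. S a (p a))) = 0"
proof -
  define S' where "S' = Matrix.mat k k (\<lambda>(a, b). S a b)"
  define v' where "v' = vec k v"
  have S': "S' \<in> carrier_mat k k" by (simp add: S'_def)
  have v': "v' \<in> carrier_vec k" by (simp add: v'_def)
  have "v' \<noteq> 0\<^sub>v k" using assms(2,3) by (auto simp: v'_def vec_eq_iff)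
  moreover have "S' *\<^sub>v v' = 0\<^sub>v k"
    using assms(1) by (auto simp: S'_def v'_def vec_eq_iff scalar_prod_def lessThan_atLeast0 intro!: sum.cong)
  ultimately have "det S' = 0" using det_0_iff_vec_prod_zero[OF S'] v' by blast
  moreover have "det S' = (\<Sum>p | p permutes {..<k}. of_int (sign p) * (\<Prod>a<k. S a (p a)))"
    unfolding det_def'[OF S'] by (auto simp: S'_def lessThan_atLeast0 intro!: sum.cong prod.cong)
  ultimately show ?thesis by simp
qed

lemma minor_eq_0_if_rank_less:
  fixes B :: "real^('d::{finite,linorder})^('d::{finite,linorder})"
  assumes "rank B < CARD('k::finite)"
  shows "minor CARD('k) B I J = 0"
proof -
  let ?k = "CARD('k)"
  define rs where "rs = sorted_list_of_set I"
  define js where "js = sorted_list_of_set J"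
  obtain h :: "'k \<Rightarrow> nat" where h: "bij_betw h UNIV {0..<?k}"
    using ex_bij_betw_finite_nat[of "UNIV :: 'k set"] by auto
  then have inj: "inj h" by (simp add: bij_betw_def)
  \<comment> \<open>E selects the columns of B indexed by J, so a kernel vector of B ** E is a kernel
    vector of the square matrix whose determinant is the minor.\<close>
  define E :: "real^'k^'d::{finite,linorder}" where "E = (\<chi> r c. if r = js ! h c then 1 else 0)"
  have BE: "(B ** E) $ r $ c = B $ r $ (js ! h c)" for r c
    by (simp add: E_def matrix_matrix_mult_def if_distrib[of "\<lambda>z. B $ r $ _ * z"] cong: if_cong)
  have "rank (B ** E) \<noteq> ?k" using rank_mul_le_left[of B E] assms by linarith
  then obtain x where x: "x \<noteq> 0" "(B ** E) *v x = 0"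
    using matrix_nonfull_linear_equations_eq by blast
  define v where "v b = x $ inv_into UNIV h b" for b
  have reindex: "(\<Sum>c\<in>UNIV. f (h c) * x $ c) = (\<Sum>b<?k. f b * v b)" for f :: "nat \<Rightarrow> real"
    using sum.reindex_bij_betw[OF h, of "\<lambda>b. f b * v b"]
    by (simp add: v_def inv_into_f_f[OF inj] atLeast0LessThan)
  obtain c0 where c0: "x $ c0 \<noteq> 0"
    using x(1) by (auto simp: Finite_Cartesian_Product.vec_eq_iff)
  have kernel: "(\<Sum>b<?k. B $ (rs ! a) $ (js ! b) * v b) = 0" for a
    using arg_cong[OF x(2), of "\<lambda>y. y $ (rs ! a)"] reindex[of "\<lambda>b. B $ (rs ! a) $ (js ! b)"]
    by (simp add: matrix_vector_mult_def BE)
  have "h c0 < ?k" "v (h c0) \<noteq> 0"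
    using h c0 by (auto simp: v_def inv_into_f_f[OF inj] bij_betw_def)
  then show ?thesis
    unfolding minor_def rs_def[symmetric] js_def[symmetric]
    by (rule leibniz_sum_eq_0_if_kernel[OF kernel])
qed

lemma ext_pow_norm_eq_0_if_rank_less:
  fixes B :: "real^('d::{finite,linorder})^('d::{finite,linorder})"
  assumes "rank B < CARD('k::finite)"
  shows "ext_pow_norm CARD('k) B = 0"
  unfolding ext_pow_norm_def ext_pow_def by (simp add: minor_eq_0_if_rank_less[OF assms])

lemma invertible_transpose_isometry_mult:
  fixes Ai Aj :: "real^('d::{finite,linorder})^('d::{finite,linorder})" and Mi Mj :: "real^'k^('d::{finite,linorder})"
  assumes Mi: "transpose Mi ** Mi = mat 1" "range ((*v) Mi) = range ((*v) Ai)"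
    and Mj: "range ((*v) Mj) = range ((*v) Aj)"
    and nonzero: "ext_pow_norm CARD('k) (Ai ** Aj) \<noteq> 0"
  shows "invertible (transpose Mi ** Ai ** Mj)"
proof (rule ccontr)
  assume "\<not> invertible (transpose Mi ** Ai ** Mj)"
  then obtain y where y: "y \<noteq> 0" "(transpose Mi ** Ai ** Mj) *v y = 0"
    using invertible_left_inverse matrix_left_invertible_ker by metis
  have "Ai ** Mj = Mi ** (transpose Mi ** Ai ** Mj)"
    using isometry_projection_range[OF Mi] by (simp add: matrix_mul_assoc)
  then have "(Ai ** Mj) *v y = 0"
    using y(2) by (simp flip: matrix_vector_mul_assoc)
  then have "rank (Ai ** Mj) \<noteq> CARD('k)"
    using y(1) matrix_nonfull_linear_equations_eq by blast
  then have "rank (Ai ** Mj) < CARD('k)"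
    using rank_bound[of "Ai ** Mj"] by linarith
  moreover have "rank (Ai ** Aj) = rank (Ai ** Mj)"
    by (simp add: rank_dim_range range_matrix_mul Mj)
  ultimately have "rank (Ai ** Aj) < CARD('k)" by simp
  then have "ext_pow_norm CARD('k) (Ai ** Aj) = 0" by (rule ext_pow_norm_eq_0_if_rank_less)
  with nonzero show False by simp
qed

lemma Theta_le:
  assumes "a \<in> {1..m}" and "b \<in> {1..m}"
  shows "Theta k m A \<le> ext_pow_norm k (A a ** A b)"
proof -
  have "finite {ext_pow_norm k (A a ** A b) | a b. a \<in> {1..m} \<and> b \<in> {1..m}}"
    by (rule finite_image_set2) simp_all
  then show ?thesis
    unfolding Theta_def by (rule Min_le) (use assms in blast)
qed

lemma funpow_shift: "(shift ^^ n) \<omega> = (\<lambda>j. \<omega> (j + n))"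
  by (induction n) (auto simp: shift_def)

lemma invertible_cocycle_iter:
  assumes "\<And>n. invertible (D ((shift ^^ n) \<omega>))"
  shows "invertible (cocycle_iter D n \<omega>)"
proof (induction n)
  case 0
  show ?case by (auto simp: invertible_def intro: exI[of _ "mat 1"])
next
  case (Suc n)
  then show ?case by (simp add: assms invertible_mult)
qed

lemma cocycle_iter_conj:
  fixes A :: "nat \<Rightarrow> real^'d^'d" and M :: "nat \<Rightarrow> real^'k^'d"
  assumes iso: "\<And>n. transpose (M (\<omega> n)) ** M (\<omega> n) = mat 1"
    and range: "\<And>n. range ((*v) (M (\<omega> n))) = range ((*v) (A (\<omega> n)))"
  shows "cocycle_iter (\<lambda>\<omega>. A (\<omega> 0)) (Suc n) \<omega>
    = M (\<omega> n) ** cocycle_iter (\<lambda>\<omega>. Cmat A M (\<omega> 1) (\<omega> 0)) n \<omega> ** (transpose (M (\<omega> 0)) ** A (\<omega> 0))"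
proof (induction n)
  case 0
  show ?case using isometry_projection_range[OF iso range, of 0] by (simp add: matrix_mul_assoc)
next
  case (Suc n)
  have factor: "A (\<omega> (Suc n)) ** M (\<omega> n) = M (\<omega> (Suc n)) ** Cmat A M (\<omega> (Suc n)) (\<omega> n)"
    using isometry_projection_range[OF iso range, of "Suc n"] by (simp add: Cmat_def matrix_mul_assoc)
  show ?case
    using Suc by (simp add: funpow_shift shift_def matrix_mul_assoc factor)
qed

lemma cocycle_conj_Hmap:
  fixes A :: "nat \<Rightarrow> real^'d^'d" and M :: "nat \<Rightarrow> real^'k^'d"
  assumes "transpose (M (\<omega> 1)) ** M (\<omega> 1) = mat 1"
    and "range ((*v) (M (\<omega> 1))) = range ((*v) (A (\<omega> 1)))"
  shows "cocycle (\<lambda>\<omega>. A (\<omega> 0)) (Hmap M (\<omega>, v))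
    = Hmap M (cocycle (\<lambda>\<omega>. Cmat A M (\<omega> 1) (\<omega> 0)) (\<omega>, v))"
  using isometry_projection_range[OF assms]
  by (simp add: cocycle_def Hmap_def shift_def Cmat_def matrix_vector_mul_assoc matrix_mul_assoc)

lemma cocycle_sing_val_limits_iff:
  fixes A :: "nat \<Rightarrow> real^'d^'d" and M :: "nat \<Rightarrow> real^'k^'d"
  assumes iso: "\<And>n. transpose (M (\<omega> n)) ** M (\<omega> n) = mat 1"
    and range: "\<And>n. range ((*v) (M (\<omega> n))) = range ((*v) (A (\<omega> n)))"
    and inv: "\<And>n. invertible (Cmat A M (\<omega> (Suc n)) (\<omega> n))"
    and i: "1 \<le> i" "i \<le> CARD('k)" "i \<le> CARD('d)"
  shows "((\<lambda>n. ln_ereal (sing_val i (cocycle_iter (\<lambda>\<omega>. A (\<omega> 0)) n \<omega>)) / ereal (real n)) \<longlonglongrightarrow> L)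
    \<longleftrightarrow> ((\<lambda>n. ln_ereal (sing_val i (cocycle_iter (\<lambda>\<omega>. Cmat A M (\<omega> 1) (\<omega> 0)) n \<omega>)) / ereal (real n)) \<longlonglongrightarrow> L)"
proof -
  define F where "F n = cocycle_iter (\<lambda>\<omega>. A (\<omega> 0)) n \<omega>" for n
  define C where "C n = cocycle_iter (\<lambda>\<omega>. Cmat A M (\<omega> 1) (\<omega> 0)) n \<omega>" for n
  define N where "N = transpose (M (\<omega> 0)) ** A (\<omega> 0)"
  obtain P where P: "N ** P = mat 1"
    unfolding N_def using right_invertible_transpose_isometry_mult[OF iso range] .
  obtain K where K: "\<And>B :: real^'k^'k. 0 < sing_val i B \<Longrightarrow>
      0 < sing_val i (B ** N) \<and> \<bar>ln (sing_val i (B ** N)) - ln (sing_val i B)\<bar> \<le> K"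
    using ln_sing_val_mult_right_invertible_bounded[OF P i] by blast
  have C_pos: "0 < sing_val i (C n)" for n
    unfolding C_def using inv i
    by (intro sing_val_pos_if_invertible invertible_cocycle_iter) (simp_all add: funpow_shift)
  have F_Suc: "sing_val i (F (Suc n)) = sing_val i (C n ** N)" for n
    unfolding F_def C_def N_def cocycle_iter_conj[where A = A and M = M and \<omega> = \<omega>, OF iso range]
    by (simp add: sing_val_isometry_mult[OF iso] flip: matrix_mul_assoc)
  define u where "u n = ln (sing_val i (C n))" for n
  define w where "w n = ln (sing_val i (F n))" for n
  have F_pos: "0 < sing_val i (F (Suc n))" and bound: "\<bar>w (Suc n) - u n\<bar> \<le> K" for n
    using K[OF C_pos[of n]] by (simp_all add: F_Suc u_def w_def)
  \<comment> \<open>Only for n > 0: ereal x / ereal 0 differs from ereal (x / 0) = 0.\<close>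
  have "\<forall>\<^sub>F n in sequentially. ln_ereal (sing_val i (F n)) / ereal (real n) = ereal (w n / real n)"
    using eventually_gt_at_top[of "0::nat"]
  proof eventually_elim
    case (elim n)
    then obtain n' where "n = Suc n'" using gr0_implies_Suc by blast
    then show ?case using F_pos[of n'] by (simp add: ln_ereal_def w_def del: of_nat_Suc)
  qed
  moreover have "\<forall>\<^sub>F n in sequentially. ln_ereal (sing_val i (C n)) / ereal (real n) = ereal (u n / real n)"
    using eventually_gt_at_top[of "0::nat"]
    by eventually_elim (simp add: C_pos ln_ereal_def u_def)
  moreover have "((\<lambda>n. ereal (w n / real n)) \<longlonglongrightarrow> L) \<longleftrightarrow> ((\<lambda>n. ereal (u n / real n)) \<longlonglongrightarrow> L)"
  proof -
    have "((\<lambda>n. ereal (w n / real n)) \<longlonglongrightarrow> L)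
        \<longleftrightarrow> ((\<lambda>n. ereal (w (Suc n) / real (Suc n))) \<longlonglongrightarrow> L)"
      using filterlim_sequentially_Suc[of "\<lambda>n. ereal (w n / real n)"] by simp
    also have "\<dots> \<longleftrightarrow> ((\<lambda>n. ereal (w (Suc n) / real n)) \<longlonglongrightarrow> L)"
      by (rule tendsto_ereal_div_Suc_iff)
    also have "\<dots> \<longleftrightarrow> ((\<lambda>n. ereal (u n / real n)) \<longlonglongrightarrow> L)"
      using tendsto_ereal_div_nat_bounded_diff[of "\<lambda>n. w (Suc n)" u K] bound by simp
    finally show ?thesis .
  qed
  ultimately show ?thesis
    unfolding F_def C_def by (simp add: tendsto_cong)
qed

lemma lyap_cong_AE:
  assumes "AE \<omega> in P. \<forall>L.
    ((\<lambda>n. ln_ereal (sing_val i (cocycle_iter D n \<omega>)) / ereal (real n)) \<longlonglongrightarrow> L)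
    \<longleftrightarrow> ((\<lambda>n. ln_ereal (sing_val i (cocycle_iter D' n \<omega>)) / ereal (real n)) \<longlonglongrightarrow> L)"
  shows "lyap P D i = lyap P D' i"
proof -
  have "AE \<omega> in P.
    ((\<lambda>n. ln_ereal (sing_val i (cocycle_iter D n \<omega>)) / ereal (real n)) \<longlonglongrightarrow> L)
    \<longleftrightarrow> ((\<lambda>n. ln_ereal (sing_val i (cocycle_iter D' n \<omega>)) / ereal (real n)) \<longlonglongrightarrow> L)" for L
    using assms by eventually_elim blast
  from eventually_subst[OF this] show ?thesis unfolding lyap_def by simp
qed

lemma AE_bernoulli_measure_in_support: "AE \<omega> in bernoulli_measure p. \<forall>n. \<omega> n \<in> set_pmf p"
  unfolding bernoulli_measure_def AE_all_countable
  by (intro allI AE_PiM_component) (auto simp: prob_space_measure_pmf AE_measure_pmf)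

theorem proposition4p5:
  fixes A :: "nat \<Rightarrow> real^('d::{finite,linorder})^('d::{finite,linorder})"
    and M :: "nat \<Rightarrow> real^'k^('d::{finite,linorder})"
    and p :: "nat pmf" and m :: nat
  assumes "m \<ge> 1"
    and "set_pmf p = {1..m}"
    and "\<forall>j\<in>{1..m}. rank (A j) = CARD('k)"
    and "Theta CARD('k) m A > 0"
    and "\<forall>i\<in>{1..m}. transpose (M i) ** M i = mat 1 \<and>
            range (\<lambda>v. M i *v v) = range (\<lambda>v. A i *v v)"
  shows "(\<forall>i\<in>{1..m}. \<forall>j\<in>{1..m}. invertible (Cmat A M i j))
    \<and> (\<forall>\<omega>. (\<forall>n. \<omega> n \<in> {1..m}) \<longrightarrow> (\<forall>v.
          cocycle (\<lambda>\<omega>. A (\<omega> 0)) (Hmap M (\<omega>, v))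
          = Hmap M (cocycle (\<lambda>\<omega>. Cmat A M (\<omega> 1) (\<omega> 0)) (\<omega>, v))))
    \<and> (\<forall>i\<in>{1..CARD('k)}.
          lyap (bernoulli_measure p) (\<lambda>\<omega>. A (\<omega> 0)) i
          = lyap (bernoulli_measure p) (\<lambda>\<omega>. Cmat A M (\<omega> 1) (\<omega> 0)) i)"
proof -
  have iso: "transpose (M j) ** M j = mat 1"
    and range: "range ((*v) (M j)) = range ((*v) (A j))" if "j \<in> {1..m}" for j
    using assms(5) that by auto
  have invertible: "\<forall>i\<in>{1..m}. \<forall>j\<in>{1..m}. invertible (Cmat A M i j)"
  proof (intro ballI)
    fix i j assume ij: "i \<in> {1..m}" "j \<in> {1..m}"
    have "ext_pow_norm CARD('k) (A i ** A j) \<noteq> 0"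
      using Theta_le[OF ij, of "CARD('k)" A] assms(4) by linarith
    then show "invertible (Cmat A M i j)"
      unfolding Cmat_def using iso range ij by (intro invertible_transpose_isometry_mult) auto
  qed
  have k_le_d: "CARD('k) \<le> CARD('d)"
    using rank_bound[of "A 1"] assms(1,3) by auto
  have "lyap (bernoulli_measure p) (\<lambda>\<omega>. A (\<omega> 0)) i
      = lyap (bernoulli_measure p) (\<lambda>\<omega>. Cmat A M (\<omega> 1) (\<omega> 0)) i" if i: "i \<in> {1..CARD('k)}" for i
    using AE_bernoulli_measure_in_support[of p]
  proof (intro lyap_cong_AE, eventually_elim)
    case (elim \<omega>)
    then show ?case
      using iso range invertible i k_le_d assms(2)
      by (intro allI cocycle_sing_val_limits_iff) auto
  qed
  moreover have "cocycle (\<lambda>\<omega>. A (\<omega> 0)) (Hmap M (\<omega>, v))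
      = Hmap M (cocycle (\<lambda>\<omega>. Cmat A M (\<omega> 1) (\<omega> 0)) (\<omega>, v))" if "\<forall>n. \<omega> n \<in> {1..m}" for \<omega> v
    using that iso range by (intro cocycle_conj_Hmap) auto
  ultimately show ?thesis using invertible by blast
qed

end
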